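(* There exists a constant $\eta>0$ such that for every line $H_1\in\mathcal H$ and every $R>0$, $$G(H_1):=\int_{\mathcal H^2}\mathbf 1\{c(H_1,H_2,H_3)\in B(0,R)\}\,\Lambda(\mathrm dH_2)\Lambda(\mathrm dH_3)\le \eta R^2.$$
   Context: $\mathcal H$ is the set of lines in $\mathbb{R}^2$, and $\Lambda$ is the translation- and rotation-invariant measure on $\mathcal H$ normalized so that the lines meeting the unit disk have measure $2$; equivalently $\int_{\mathcal H}f(H)\Lambda(\mathrm dH)=\int_{S^1}\int_0^\infty f(H(r,u))\,\mathrm dr\,\sigma(\mathrm du)$, where $H(r,u)$ is the line at distance $r$ from the origin with unit normal $u$, and $\sigma$ is the rotation-invariant measure on $S^1$ with $\sigma(S^1)=2$. For three lines $H_1,H_2,H_3$ in general position, $\Delta(H_1,H_2,H_3)$ denotes the unique triangle formed by them, and $c(H_1,H_2,H_3)$ is the incenter of this triangle (the integrand is defined for $\Lambda^2$-a.e. $(H_2,H_3)$). $B(0,R)$ is the closed disk of radius $R$ centered at the origin. *)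

theory Defs
  imports "HOL-Analysis.Analysis"
begin

type_synonym point = "real ^ 2"

definition line_of :: "real \<times> real \<Rightarrow> point set" where
  "line_of p = {x. x $ 1 * cos (snd p) + x $ 2 * sin (snd p) = fst p}"

definition is_line :: "point set \<Rightarrow> bool" where
  "is_line L \<longleftrightarrow> (\<exists>u r. norm u = 1 \<and> L = {x. inner x u = r})"

text \<open>The invariant measure Lambda on lines, in the parameters (r, t), r \<ge> 0,
  t \<in> [0, 2 pi); sigma = (1/pi) dt has total mass 2.\<close>
definition Lam :: "(real \<times> real) measure" where
  "Lam = density lborel (\<lambda>p. ennreal (indicator ({0..} \<times> {0..<2*pi}) p / pi))"

definition meet :: "point set \<Rightarrow> point set \<Rightarrow> point" where
  "meet L M = (THE x. x \<in> L \<and> x \<in> M)"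

definition general_position :: "point set \<Rightarrow> point set \<Rightarrow> point set \<Rightarrow> bool" where
  "general_position L1 L2 L3 \<longleftrightarrow>
     (\<exists>!x. x \<in> L1 \<and> x \<in> L2) \<and> (\<exists>!x. x \<in> L1 \<and> x \<in> L3) \<and> (\<exists>!x. x \<in> L2 \<and> x \<in> L3) \<and>
     meet L2 L3 \<noteq> meet L1 L3 \<and> meet L2 L3 \<noteq> meet L1 L2 \<and> meet L1 L3 \<noteq> meet L1 L2"

definition incenter :: "point set \<Rightarrow> point set \<Rightarrow> point set \<Rightarrow> point" where
  "incenter L1 L2 L3 =
     (let A = meet L2 L3; B = meet L1 L3; C = meet L1 L2;
          a = dist B C; b = dist A C; c = dist A B
      in (1 / (a + b + c)) *\<^sub>R (a *\<^sub>R A + b *\<^sub>R B + c *\<^sub>R C))"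

end

theory Submission
  imports Defs
begin

text \<open>The incenter is at the same distance from all three sides of the triangle. If it lies in
  B(0,R) and H1 = {x. x \<bullet> v = s}, then for H2 = H(r,u) the point I satisfies
  |I \<bullet> u - r| = |I \<bullet> v - s| with |I \<bullet> u|, |I \<bullet> v| \<le> R, so r lies within 2R of s or of -s.
  Hence the integration domain is contained in S \<times> S, where S is the set of lines whose
  parameter r lies in two intervals of total length 8R; such a set has \<Lambda>-measure at most 16R.\<close>

lemma norm_vec2: "norm (x::real^2) = sqrt ((x$1)\<^sup>2 + (x$2)\<^sup>2)"
  by (simp add: norm_vec_def L2_set_def sum_2)

lemma inner_vec2: "inner (x::real^2) y = x$1 * y$1 + x$2 * y$2"
  by (simp add: inner_vec_def sum_2)

definition cross2 :: "real^2 \<Rightarrow> real^2 \<Rightarrow> real" where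
  "cross2 w z = w$1 * z$2 - w$2 * z$1"

lemma cross2_antisym: "cross2 z w = - cross2 w z"
  by (simp add: cross2_def)

text \<open>Area of a parallelogram as base times height, u being a unit normal of the base w.\<close>
lemma norm_mult_abs_inner_normal:
  fixes w z u :: "real^2"
  assumes u: "norm u = 1" and wu: "inner w u = 0"
  shows "norm w * \<bar>inner z u\<bar> = \<bar>cross2 w z\<bar>"
proof -
  have u2: "(u$1)\<^sup>2 + (u$2)\<^sup>2 = 1"
    using u by (simp add: norm_vec2)
  have wu': "w$1 * u$1 + w$2 * u$2 = 0"
    using wu by (simp add: inner_vec2)
  have "((w$1)\<^sup>2 + (w$2)\<^sup>2) * ((u$1)\<^sup>2 + (u$2)\<^sup>2)
          = (w$1 * u$1 + w$2 * u$2)\<^sup>2 + (w$1 * u$2 - w$2 * u$1)\<^sup>2"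
    by algebra
  then have "norm w = \<bar>w$1 * u$2 - w$2 * u$1\<bar>"
    using u2 wu' by (simp add: norm_vec2)
  moreover have "(w$1 * u$2 - w$2 * u$1) * (z$1 * u$1 + z$2 * u$2) - cross2 w z * ((u$1)\<^sup>2 + (u$2)\<^sup>2)
                   = - (w$1 * u$1 + w$2 * u$2) * (z$2 * u$1 - z$1 * u$2)"
    by (simp add: cross2_def) algebra
  ultimately show ?thesis
    using u2 wu' by (simp add: inner_vec2 abs_mult[symmetric])
qed

definition incenter_pt :: "real^2 \<Rightarrow> real^2 \<Rightarrow> real^2 \<Rightarrow> real^2" where
  "incenter_pt A B C = (1 / (dist B C + dist A C + dist A B)) *\<^sub>R
     (dist B C *\<^sub>R A + dist A C *\<^sub>R B + dist A B *\<^sub>R C)"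

lemma incenter_pt_swap: "incenter_pt B A C = incenter_pt A B C"
  unfolding incenter_pt_def by (simp add: dist_commute algebra_simps)

lemma incenter_pt_side_dist:
  fixes A B C u :: "real^2"
  assumes BC: "B \<noteq> C" and u: "norm u = 1" and B: "inner B u = k" and C: "inner C u = k"
  shows "(dist B C + dist A C + dist A B) * \<bar>inner (incenter_pt A B C) u - k\<bar>
           = \<bar>cross2 (B - C) (A - C)\<bar>"
proof -
  define a b c where "a = dist B C" and "b = dist A C" and "c = dist A B"
  have pos: "a + b + c > 0"
    using BC by (simp add: a_def b_def c_def add_pos_nonneg)
  have "(a + b + c) *\<^sub>R incenter_pt A B C = a *\<^sub>R A + b *\<^sub>R B + c *\<^sub>R C"
    using pos by (simp add: incenter_pt_def a_def b_def c_def)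
  then have "(a + b + c) * inner (incenter_pt A B C) u = a * inner A u + b * k + c * k"
    using B C by (metis inner_add_left inner_scaleR_left)
  then have "(a + b + c) * (inner (incenter_pt A B C) u - k) = a * inner (A - C) u"
    using C by (simp add: inner_diff_left algebra_simps)
  then have "(a + b + c) * \<bar>inner (incenter_pt A B C) u - k\<bar> = a * \<bar>inner (A - C) u\<bar>"
    using pos by (metis abs_mult abs_of_pos abs_of_nonneg zero_le_dist a_def)
  also have "\<dots> = \<bar>cross2 (B - C) (A - C)\<bar>"
    using norm_mult_abs_inner_normal[OF u, of "B - C" "A - C"] B C
    by (simp add: a_def dist_norm inner_diff_left)
  finally show ?thesis by (simp add: a_def b_def c_def)
qed

lemma incenter_pt_equidistant:
  fixes A B C u v :: "real^2"
  assumes "A \<noteq> C" "B \<noteq> C" "norm u = 1" "norm v = 1"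
    and "inner B u = k" "inner C u = k" "inner A v = l" "inner C v = l"
  shows "\<bar>inner (incenter_pt A B C) u - k\<bar> = \<bar>inner (incenter_pt A B C) v - l\<bar>"
proof -
  have pos: "dist B C + dist A C + dist A B > 0"
    using assms(2) by (simp add: add_pos_nonneg)
  have side_u: "(dist B C + dist A C + dist A B) * \<bar>inner (incenter_pt A B C) u - k\<bar>
          = \<bar>cross2 (B - C) (A - C)\<bar>"
    using assms by (intro incenter_pt_side_dist) auto
  have "(dist A C + dist B C + dist B A) * \<bar>inner (incenter_pt B A C) v - l\<bar>
          = \<bar>cross2 (A - C) (B - C)\<bar>"
    using assms by (intro incenter_pt_side_dist) auto
  then have "(dist B C + dist A C + dist A B) * \<bar>inner (incenter_pt A B C) v - l\<bar>
          = \<bar>cross2 (B - C) (A - C)\<bar>"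
    by (simp only: incenter_pt_swap dist_commute[of B A] add.commute[of "dist A C"]
        cross2_antisym[of "A - C"] abs_minus_cancel)
  with side_u pos show ?thesis
    by (metis mult_left_cancel less_irrefl)
qed

lemma offset_close_if_equidistant:
  fixes I u v :: "'a::real_inner"
  assumes "norm I \<le> R" "norm u = 1" "norm v = 1"
    and "\<bar>inner I u - k\<bar> = \<bar>inner I v - l\<bar>"
  shows "\<bar>l - k\<bar> \<le> 2 * R \<or> \<bar>l + k\<bar> \<le> 2 * R"
proof -
  have "\<bar>inner I u\<bar> \<le> R" "\<bar>inner I v\<bar> \<le> R"
    using Cauchy_Schwarz_ineq2[of I u] Cauchy_Schwarz_ineq2[of I v] assms by simp_all
  then show ?thesis
    using assms(4) by linarith
qed

lemma line_of_eq: "line_of (r, t) = {x. inner x (vector [cos t, sin t]) = r}"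
  by (simp add: line_of_def inner_vec2)

lemma norm_vector_cos_sin: "norm (vector [cos t, sin t] :: real^2) = 1"
  by (simp add: norm_vec2)

lemma meet_sym: "meet L M = meet M L"
  unfolding meet_def by (simp only: conj_commute)

lemma meet_in: "\<exists>!x. x \<in> L \<and> x \<in> M \<Longrightarrow> meet L M \<in> L \<and> meet L M \<in> M"
  unfolding meet_def by (rule theI')

lemma general_position_swap23:
  "general_position L1 L2 L3 \<Longrightarrow> general_position L1 L3 L2"
  unfolding general_position_def meet_sym[of L3 L2] by (auto simp: conj_commute)

lemma incenter_eq_incenter_pt:
  "incenter L1 L2 L3 = incenter_pt (meet L2 L3) (meet L1 L3) (meet L1 L2)"
  by (simp add: incenter_def incenter_pt_def Let_def)

lemma incenter_swap23: "incenter L1 L3 L2 = incenter L1 L2 L3"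
  unfolding incenter_def Let_def meet_sym[of L3 L2] by (simp add: dist_commute algebra_simps)

lemma incenter_equidistant:
  fixes u v :: "real^2"
  assumes gp: "general_position L1 L2 L3"
    and u: "norm u = 1" "L1 = {x. inner x u = k}"
    and v: "norm v = 1" "L2 = {x. inner x v = l}"
  shows "\<bar>inner (incenter L1 L2 L3) u - k\<bar> = \<bar>inner (incenter L1 L2 L3) v - l\<bar>"
  using gp meet_in[of L2 L3] meet_in[of L1 L3] meet_in[of L1 L2] u v
  unfolding incenter_eq_incenter_pt general_position_def
  by (intro incenter_pt_equidistant) auto

lemma line_offset_close_if_incenter_in_cball:
  fixes v :: "real^2"
  assumes v: "norm v = 1" and H1: "H1 = {x. inner x v = s}"
    and gp: "general_position H1 (line_of (r, t)) L3"
    and I: "incenter H1 (line_of (r, t)) L3 \<in> cball 0 R"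
  shows "\<bar>r - s\<bar> \<le> 2 * R \<or> \<bar>r + s\<bar> \<le> 2 * R"
  using I v norm_vector_cos_sin
    incenter_equidistant[OF gp v H1 norm_vector_cos_sin line_of_eq]
  by (intro offset_close_if_equidistant[of "incenter H1 (line_of (r, t)) L3"]) auto

lemma Lam_density_measurable:
  "(\<lambda>p::real \<times> real. indicator ({0..} \<times> {0..<2*pi}) p / pi :: real) \<in> borel_measurable borel"
  by (intro borel_measurable_divide borel_measurable_indicator borel_Times) auto

lemma sigma_finite_Lam: "sigma_finite_measure Lam"
  unfolding Lam_def
  by (subst sigma_finite_measure.sigma_finite_iff_density_finite[OF lborel.sigma_finite_measure_axioms])
     (auto intro: Lam_density_measurable)

lemma sets_Lam: "sets Lam = sets lborel"
  by (simp add: Lam_def)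

text \<open>The normal directions carry total mass 2.\<close>
lemma emeasure_Lam_Times_UNIV_le:
  assumes J: "J \<in> sets borel"
  shows "emeasure Lam (J \<times> UNIV) \<le> 2 * emeasure lborel J"
proof -
  have JU: "J \<times> UNIV \<in> sets lborel" and JT: "J \<times> {0..2*pi} \<in> sets lborel"
    using J by (simp_all add: lborel_prod[symmetric])
  have "emeasure Lam (J \<times> UNIV)
          = (\<integral>\<^sup>+x. ennreal (indicator ({0..} \<times> {0..<2*pi}) x / pi) * indicator (J \<times> UNIV) x \<partial>lborel)"
    unfolding Lam_def using JU Lam_density_measurable by (subst emeasure_density) (auto simp: mult.commute)
  also have "\<dots> \<le> (\<integral>\<^sup>+x. ennreal (1/pi) * indicator (J \<times> {0..2*pi}) x \<partial>lborel)"
    by (intro nn_integral_mono) (auto split: split_indicator)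
  also have "\<dots> = ennreal (1/pi) * emeasure (lborel \<Otimes>\<^sub>M lborel) (J \<times> {0..2*pi})"
    using JT by (simp add: nn_integral_cmult_indicator lborel_prod)
  also have "\<dots> = ennreal (1/pi) * (emeasure lborel J * ennreal (2*pi))"
    using J by (simp add: lborel.emeasure_pair_measure_Times)
  also have "\<dots> = 2 * emeasure lborel J"
    by (simp add: ennreal_mult[symmetric] mult_ac del: ennreal_mult)
  finally show ?thesis .
qed

definition offset_strip :: "real \<Rightarrow> real \<Rightarrow> (real \<times> real) set" where
  "offset_strip s R = ({s-2*R..s+2*R} \<union> {-s-2*R..-s+2*R}) \<times> UNIV"

lemma offset_strip_sets_Lam: "offset_strip s R \<in> sets Lam"
  by (simp add: offset_strip_def sets_Lam lborel_prod[symmetric])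

lemma line_of_in_offset_strip_if_incenter_in_cball:
  fixes v :: "real^2"
  assumes v: "norm v = 1" and H1: "H1 = {x. inner x v = s}"
    and gp: "general_position H1 (line_of p) (line_of q)"
    and I: "incenter H1 (line_of p) (line_of q) \<in> cball 0 R"
  shows "p \<in> offset_strip s R \<and> q \<in> offset_strip s R"
proof -
  obtain r2 t2 r3 t3 where pq: "p = (r2, t2)" "q = (r3, t3)"
    by fastforce
  have "\<bar>r2 - s\<bar> \<le> 2 * R \<or> \<bar>r2 + s\<bar> \<le> 2 * R"
    using gp I unfolding pq by (rule line_offset_close_if_incenter_in_cball[OF v H1])
  moreover have "incenter H1 (line_of (r3, t3)) (line_of (r2, t2)) \<in> cball 0 R"
    using I by (simp add: pq incenter_swap23[of H1 "line_of (r2, t2)"])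
  then have "\<bar>r3 - s\<bar> \<le> 2 * R \<or> \<bar>r3 + s\<bar> \<le> 2 * R"
    using general_position_swap23[OF gp] unfolding pq
    by (intro line_offset_close_if_incenter_in_cball[OF v H1])
  ultimately show ?thesis
    by (auto simp: pq offset_strip_def abs_le_iff)
qed

lemma emeasure_Lam_offset_strip_le:
  assumes R: "R > 0"
  shows "emeasure Lam (offset_strip s R) \<le> ennreal (16 * R)"
proof -
  have "emeasure lborel ({s-2*R..s+2*R} \<union> {-s-2*R..-s+2*R})
          \<le> emeasure lborel {s-2*R..s+2*R} + emeasure lborel {-s-2*R..-s+2*R}"
    by (rule emeasure_subadditive) auto
  also have "\<dots> = ennreal (8 * R)"
    using R by (simp add: ennreal_plus[symmetric] del: ennreal_plus)
  finally have "2 * emeasure lborel ({s-2*R..s+2*R} \<union> {-s-2*R..-s+2*R}) \<le> 2 * ennreal (8 * R)"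
    by (rule mult_left_mono) simp
  also have "\<dots> = ennreal (16 * R)"
    using R by (simp add: ennreal_mult''[symmetric] flip: ennreal_numeral)
  finally show ?thesis
    using emeasure_Lam_Times_UNIV_le[of "{s-2*R..s+2*R} \<union> {-s-2*R..-s+2*R}"]
    by (auto simp: offset_strip_def)
qed

theorem lemma3p2:
  shows "\<exists>\<eta>>0. \<forall>H1 (R::real). is_line H1 \<and> R > 0 \<longrightarrow>
    (\<integral>\<^sup>+ pq. indicator {pq. general_position H1 (line_of (fst pq)) (line_of (snd pq)) \<and>
                 incenter H1 (line_of (fst pq)) (line_of (snd pq)) \<in> cball 0 R} pq
       \<partial>(Lam \<Otimes>\<^sub>M Lam)) \<le> ennreal (\<eta> * R\<^sup>2)"
proof (intro exI[of _ 256] conjI allI impI)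
  fix H1 and R :: real
  assume "is_line H1 \<and> R > 0"
  then obtain v s where v: "norm v = 1" and H1: "H1 = {x. inner x v = s}" and R: "R > 0"
    unfolding is_line_def by blast
  let ?X = "{pq. general_position H1 (line_of (fst pq)) (line_of (snd pq)) \<and>
                 incenter H1 (line_of (fst pq)) (line_of (snd pq)) \<in> cball 0 R}"
  let ?S = "offset_strip s R"
  have "(\<integral>\<^sup>+ pq. indicator ?X pq \<partial>(Lam \<Otimes>\<^sub>M Lam)) \<le> (\<integral>\<^sup>+ pq. indicator (?S \<times> ?S) pq \<partial>(Lam \<Otimes>\<^sub>M Lam))"
    using line_of_in_offset_strip_if_incenter_in_cball[OF v H1]
    by (intro nn_integral_mono) (auto split: split_indicator)
  also have "\<dots> = emeasure Lam ?S * emeasure Lam ?S"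
    using offset_strip_sets_Lam
    by (simp add: sigma_finite_measure.emeasure_pair_measure_Times[OF sigma_finite_Lam])
  also have "\<dots> \<le> ennreal (16 * R) * ennreal (16 * R)"
    using emeasure_Lam_offset_strip_le[OF R] by (intro mult_mono) auto
  also have "\<dots> = ennreal (256 * R\<^sup>2)"
    using R by (simp add: ennreal_mult[symmetric] power2_eq_square del: ennreal_mult)
  finally show "(\<integral>\<^sup>+ pq. indicator ?X pq \<partial>(Lam \<Otimes>\<^sub>M Lam)) \<le> ennreal (256 * R\<^sup>2)" .
qed simp

end
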